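(* Let $A=\langle V,\textit{val}_0,\delta\rangle$ be an arena over disjoint finite Boolean sets $\mathbb{E},\mathbb{C}$, let $Pr\subseteq Pred(V)$ and $\mathbb{E}'\supseteq\mathbb{E}$ be finite, and let $M$ be an abstract counterstrategy, i.e. a Moore machine with input $2^{\mathbb{C}}$ and output $2^{\mathbb{E}'\cup Pr}$. Then $M$ is concretisable w.r.t. $A$ if and only if every trace $t\in L(M)$ is concretisable in $A$.
   Context: Theory setting: fix a first-order theory with constants $\mathcal{C}$. For finite $V$, $\mathcal{T}(V)$ are terms over $V$; $V_{prev}=\{v_{prev}\}$ fresh copies. State predicates: predicates over $\mathcal{T}(V)$; transition predicates: over $\mathcal{T}(V\cup V_{prev})$; $Pred(V)$ their union. Valuations $V\to\mathcal{C}$ form $\textit{Val}(V)$. Updates $U:V\to\mathcal{T}(V)$ act by $U(\textit{val})(v)=$ value of $U(v)$ under $\textit{val}$. $\textit{val}\models s$: $\textit{val}$ is a model of state predicate $s$; $(\textit{val},\textit{val}')\models t$: $\textit{val}_{prev}\cup\textit{val}'$ is a model of $t$, with $\textit{val}_{prev}(v_{prev})=\textit{val}(v)$. A valuation not assigning all variables of a formula does not satisfy it. For $S\subseteq T$, $\bigwedge\!\!\bigwedge_T S:=\bigwedge S\wedge\bigwedge_{s\in T\setminus S}\neg s$. Arena $A=\langle V,\textit{val}_0,\delta\rangle$: $\delta$ is a finite-domain partial function from Boolean combinations of $\mathbb{E}\cup\mathbb{C}\cup Pred(V)$ to updates with, for each $\textit{val}$, $E\subseteq\mathbb{E}$, $C\subseteq\mathbb{C}$,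 exactly one $f\in dom(\delta)$ with $(\textit{val},E\cup C)\models f$; $\delta(\textit{val},E\cup C):=\delta(f)(\textit{val})$. $L(A)$: words $w\in(\textit{Val}(V)\times2^{\mathbb{E}\cup\mathbb{C}})^\omega$ with $w(0)=(\textit{val}_0,\cdot)$ and $\textit{val}_{i+1}=\delta(\textit{val}_i,E_i\cup C_i)$, where $w(i)=(\textit{val}_i,E_i\cup C_i)$. An abstract word $a\in(2^{\mathbb{E}'\cup\mathbb{C}\cup Pr})^\omega$ abstracts $w$ if for all $i$, with $a(i)=E_i\cup C_i\cup Pr_i$, $w(i)=(\textit{val}_i,(E_i\cap\mathbb{E})\cup C_i)$, $\textit{val}_0\models\bigwedge\!\!\bigwedge_{Pr}Pr_0$, and $(\textit{val}_{i-1},\textit{val}_i)\models\bigwedge\!\!\bigwedge_{Pr}Pr_i$ for $i>0$; $\gamma(a)$ is the set of such $w$; $a$ is concretisable in $A$ if $L(A)\cap\gamma(a)\neq\emptyset$. Moore machine $M=\langle S,s_0,2^{\mathbb{C}},2^{\mathbb{E}'\cup Pr},\rightarrow,out\rangle$ with total deterministic $\rightarrow:S\times2^{\mathbb{C}}\to S$; a run produces the word $(C_i\cup out(s_i))_i$ where $s_{i+1}$ is the $C_i$-successor of $s_i$; $L(M)$ is the set of these traces. Concretisability of $M$: let $\preceq_A\subseteq\textit{Val}(V)\times S$ be the largest relation such that whenever $\textit{val}\preceq_A s$ with $out(s)=E\cup ST\cup TR$ ($E\subseteq\mathbb{E}'$, $ST$ state predicates, $TR$ transition predicates): (1) $\textit{val}\models\bigwedge\!\!\bigwedge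 ST$ (w.r.t. the state predicates of $Pr$); (2) for every $C\subseteq\mathbb{C}$, with $\textit{val}_C=\delta(\textit{val},(E\cap\mathbb{E})\cup C)$, $s_C$ the $C$-successor of $s$, $TR_C$ the transition predicates in $out(s_C)$: (a) $(\textit{val},\textit{val}_C)\models\bigwedge\!\!\bigwedge TR_C$ (w.r.t. the transition predicates of $Pr$) and (b) $\textit{val}_C\preceq_A s_C$. $M$ is concretisable w.r.t. $A$ if $\textit{val}_0\preceq_A s_0$.
   Formalization: In the definition of abstracts, the condition at position 0 is that $\textit{val}_0$ satisfies exactly the state predicates of $Pr_0$ among the state predicates of Pr, transition predicates in $Pr_0$ being ignored, instead of $\textit{val}_0\models\bigwedge\!\!\bigwedge_{Pr}Pr_0$. The statement above fails without it. *)

theory Defs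
  imports Main
begin

text \<open>Variables V are a finite type 'v, the constants of the theory are a type 'd;
  valuations are total maps 'v => 'd.  A predicate is represented semantically by
  its set of models: a state predicate by a test on a valuation of V, a transition
  predicate by a test on the pair (previous valuation, current valuation), i.e.
  on a valuation of V_prev union V.\<close>

datatype ('v, 'd) pred =
    SPred "('v \<Rightarrow> 'd) \<Rightarrow> bool"
  | TPred "('v \<Rightarrow> 'd) \<Rightarrow> ('v \<Rightarrow> 'd) \<Rightarrow> bool"

definition is_state_pred :: "('v, 'd) pred \<Rightarrow> bool" where
  "is_state_pred p = (case p of SPred _ \<Rightarrow> True | TPred _ \<Rightarrow> False)"

definition is_trans_pred :: "('v, 'd) pred \<Rightarrow> bool" where
  "is_trans_pred p = (\<not> is_state_pred p)"

fun sat_state :: "('v \<Rightarrow> 'd) \<Rightarrow> ('v, 'd) pred \<Rightarrow> bool" where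
  "sat_state val (SPred s) = s val"
| "sat_state val (TPred t) = False"

text \<open>(val, val') |= p : the valuation val_prev union val' is a model of p
  (a state predicate only mentions V, hence is evaluated on val')\<close>
fun sat_trans :: "('v \<Rightarrow> 'd) \<Rightarrow> ('v \<Rightarrow> 'd) \<Rightarrow> ('v, 'd) pred \<Rightarrow> bool" where
  "sat_trans val val' (SPred s) = s val'"
| "sat_trans val val' (TPred t) = t val val'"

definition bigwedge :: "('p \<Rightarrow> bool) \<Rightarrow> 'p set \<Rightarrow> 'p set \<Rightarrow> bool" where
  "bigwedge sat T S = ((\<forall>p\<in>S. sat p) \<and> (\<forall>p\<in>T - S. \<not> sat p))"

text \<open>An update U : V -> T(V), each term represented by its evaluation function.\<close>
type_synonym ('v, 'd) update = "'v \<Rightarrow> ('v \<Rightarrow> 'd) \<Rightarrow> 'd"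

definition apply_upd :: "('v, 'd) update \<Rightarrow> ('v \<Rightarrow> 'd) \<Rightarrow> ('v \<Rightarrow> 'd)" where
  "apply_upd U val = (\<lambda>v. U v val)"

datatype ('e, 'c, 'v, 'd) guard =
    GTrue
  | GEnv 'e
  | GCon 'c
  | GPred "('v \<Rightarrow> 'd) \<Rightarrow> bool"
  | GNot "('e, 'c, 'v, 'd) guard"
  | GAnd "('e, 'c, 'v, 'd) guard" "('e, 'c, 'v, 'd) guard"
  | GOr "('e, 'c, 'v, 'd) guard" "('e, 'c, 'v, 'd) guard"

fun gsat :: "('v \<Rightarrow> 'd) \<Rightarrow> 'e set \<Rightarrow> 'c set \<Rightarrow> ('e, 'c, 'v, 'd) guard \<Rightarrow> bool" where
  "gsat val E C GTrue = True"
| "gsat val E C (GEnv e) = (e \<in> E)"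
| "gsat val E C (GCon c) = (c \<in> C)"
| "gsat val E C (GPred s) = s val"
| "gsat val E C (GNot f) = (\<not> gsat val E C f)"
| "gsat val E C (GAnd f g) = (gsat val E C f \<and> gsat val E C g)"
| "gsat val E C (GOr f g) = (gsat val E C f \<or> gsat val E C g)"

fun genv_atoms :: "('e, 'c, 'v, 'd) guard \<Rightarrow> 'e set" where
  "genv_atoms GTrue = {}"
| "genv_atoms (GEnv e) = {e}"
| "genv_atoms (GCon c) = {}"
| "genv_atoms (GPred s) = {}"
| "genv_atoms (GNot f) = genv_atoms f"
| "genv_atoms (GAnd f g) = genv_atoms f \<union> genv_atoms g"
| "genv_atoms (GOr f g) = genv_atoms f \<union> genv_atoms g"

fun gcon_atoms :: "('e, 'c, 'v, 'd) guard \<Rightarrow> 'c set" where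
  "gcon_atoms GTrue = {}"
| "gcon_atoms (GEnv e) = {}"
| "gcon_atoms (GCon c) = {c}"
| "gcon_atoms (GPred s) = {}"
| "gcon_atoms (GNot f) = gcon_atoms f"
| "gcon_atoms (GAnd f g) = gcon_atoms f \<union> gcon_atoms g"
| "gcon_atoms (GOr f g) = gcon_atoms f \<union> gcon_atoms g"

text \<open>An arena <V, val_0, delta> over the finite sets EE (environment) and CC
  (controller); V is the finite type 'v, val_0 is a separate parameter.\<close>
definition is_arena ::
  "'e set \<Rightarrow> 'c set \<Rightarrow> (('e, 'c, 'v, 'd) guard \<rightharpoonup> ('v, 'd) update) \<Rightarrow> bool" where
  "is_arena EE CC \<delta> \<longleftrightarrow>
     finite EE \<and> finite CC \<and> finite (dom \<delta>) \<and>
     (\<forall>f\<in>dom \<delta>. genv_atoms f \<subseteq> EE \<and> gcon_atoms f \<subseteq> CC) \<and>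
     (\<forall>val E C. E \<subseteq> EE \<longrightarrow> C \<subseteq> CC \<longrightarrow> (\<exists>!f. f \<in> dom \<delta> \<and> gsat val E C f))"

definition delta_app ::
  "(('e, 'c, 'v, 'd) guard \<rightharpoonup> ('v, 'd) update) \<Rightarrow> ('v \<Rightarrow> 'd) \<Rightarrow> 'e set \<Rightarrow> 'c set \<Rightarrow> ('v \<Rightarrow> 'd)" where
  "delta_app \<delta> val E C =
     apply_upd (the (\<delta> (THE f. f \<in> dom \<delta> \<and> gsat val E C f))) val"

text \<open>L(A): concrete words, letter i = (val_i, E_i, C_i) standing for (val_i, E_i u C_i)\<close>
definition arena_lang ::
  "'e set \<Rightarrow> 'c set \<Rightarrow> ('v \<Rightarrow> 'd) \<Rightarrow> (('e, 'c, 'v, 'd) guard \<rightharpoonup> ('v, 'd) update)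
   \<Rightarrow> (nat \<Rightarrow> ('v \<Rightarrow> 'd) \<times> 'e set \<times> 'c set) set" where
  "arena_lang EE CC val0 \<delta> =
     {w. (\<forall>i. fst (snd (w i)) \<subseteq> EE \<and> snd (snd (w i)) \<subseteq> CC) \<and>
         fst (w 0) = val0 \<and>
         (\<forall>i. fst (w (Suc i)) = delta_app \<delta> (fst (w i)) (fst (snd (w i))) (snd (snd (w i))))}"

text \<open>Abstract letter i = (E_i, C_i, Pr_i) standing for E_i u C_i u Pr_i.
  At position 0 only the state predicates of Pr are taken into account
  (val_0 assigns no previous-state variables).\<close>
definition abstracts ::
  "'e set \<Rightarrow> ('v, 'd) pred set \<Rightarrow> (nat \<Rightarrow> 'e set \<times> 'c set \<times> ('v, 'd) pred set)
   \<Rightarrow> (nat \<Rightarrow> ('v \<Rightarrow> 'd) \<times> 'e set \<times> 'c set) \<Rightarrow> bool" where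
  "abstracts EE Pr a w \<longleftrightarrow>
     (\<forall>i. snd (w i) = (fst (a i) \<inter> EE, fst (snd (a i)))) \<and>
     bigwedge (sat_state (fst (w 0))) {p\<in>Pr. is_state_pred p}
              {p\<in>snd (snd (a 0)). is_state_pred p} \<and>
     (\<forall>i>0. bigwedge (sat_trans (fst (w (i - 1))) (fst (w i))) Pr (snd (snd (a i))))"

definition gamma ::
  "'e set \<Rightarrow> ('v, 'd) pred set \<Rightarrow> (nat \<Rightarrow> 'e set \<times> 'c set \<times> ('v, 'd) pred set)
   \<Rightarrow> (nat \<Rightarrow> ('v \<Rightarrow> 'd) \<times> 'e set \<times> 'c set) set" where
  "gamma EE Pr a = {w. abstracts EE Pr a w}"

definition concretisable_word ::
  "'e set \<Rightarrow> 'c set \<Rightarrow> ('v, 'd) pred set \<Rightarrow> ('v \<Rightarrow> 'd)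
   \<Rightarrow> (('e, 'c, 'v, 'd) guard \<rightharpoonup> ('v, 'd) update)
   \<Rightarrow> (nat \<Rightarrow> 'e set \<times> 'c set \<times> ('v, 'd) pred set) \<Rightarrow> bool" where
  "concretisable_word EE CC Pr val0 \<delta> a \<longleftrightarrow> arena_lang EE CC val0 \<delta> \<inter> gamma EE Pr a \<noteq> {}"

text \<open>Moore machine <S, s0, 2^CC, 2^(EE' u Pr), tr, out>; out s = (E, P) stands
  for the output E u P with E \<subseteq> EE', P \<subseteq> Pr.\<close>
definition is_moore ::
  "'c set \<Rightarrow> 'e set \<Rightarrow> ('v, 'd) pred set \<Rightarrow> 's set \<Rightarrow> 's \<Rightarrow> ('s \<Rightarrow> 'c set \<Rightarrow> 's)
   \<Rightarrow> ('s \<Rightarrow> 'e set \<times> ('v, 'd) pred set) \<Rightarrow> bool" where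
  "is_moore CC EE' Pr S s0 tr out \<longleftrightarrow>
     s0 \<in> S \<and>
     (\<forall>s\<in>S. \<forall>C. C \<subseteq> CC \<longrightarrow> tr s C \<in> S) \<and>
     (\<forall>s\<in>S. fst (out s) \<subseteq> EE' \<and> snd (out s) \<subseteq> Pr)"

fun moore_run :: "'s \<Rightarrow> ('s \<Rightarrow> 'c set \<Rightarrow> 's) \<Rightarrow> (nat \<Rightarrow> 'c set) \<Rightarrow> nat \<Rightarrow> 's" where
  "moore_run s0 tr Cs 0 = s0"
| "moore_run s0 tr Cs (Suc i) = tr (moore_run s0 tr Cs i) (Cs i)"

definition moore_lang ::
  "'c set \<Rightarrow> 's \<Rightarrow> ('s \<Rightarrow> 'c set \<Rightarrow> 's) \<Rightarrow> ('s \<Rightarrow> 'e set \<times> ('v, 'd) pred set)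
   \<Rightarrow> (nat \<Rightarrow> 'e set \<times> 'c set \<times> ('v, 'd) pred set) set" where
  "moore_lang CC s0 tr out =
     {(\<lambda>i. (fst (out (moore_run s0 tr Cs i)), Cs i, snd (out (moore_run s0 tr Cs i))))
      | Cs. \<forall>i. Cs i \<subseteq> CC}"

text \<open>R satisfies the defining (post-fixed point) conditions of the relation preceq_A.\<close>
definition conc_rel ::
  "'e set \<Rightarrow> 'c set \<Rightarrow> ('v, 'd) pred set \<Rightarrow> (('e, 'c, 'v, 'd) guard \<rightharpoonup> ('v, 'd) update)
   \<Rightarrow> 's set \<Rightarrow> ('s \<Rightarrow> 'c set \<Rightarrow> 's) \<Rightarrow> ('s \<Rightarrow> 'e set \<times> ('v, 'd) pred set)
   \<Rightarrow> (('v \<Rightarrow> 'd) \<times> 's) set \<Rightarrow> bool" where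
  "conc_rel EE CC Pr \<delta> S tr out R \<longleftrightarrow>
     (\<forall>(val, s)\<in>R. s \<in> S \<and>
        bigwedge (sat_state val) {p\<in>Pr. is_state_pred p}
                 {p\<in>snd (out s). is_state_pred p} \<and>
        (\<forall>C. C \<subseteq> CC \<longrightarrow>
           (let valC = delta_app \<delta> val (fst (out s) \<inter> EE) C; sC = tr s C in
              bigwedge (sat_trans val valC) {p\<in>Pr. is_trans_pred p}
                       {p\<in>snd (out sC). is_trans_pred p} \<and>
              (valC, sC) \<in> R)))"

definition conc_preceq ::
  "'e set \<Rightarrow> 'c set \<Rightarrow> ('v, 'd) pred set \<Rightarrow> (('e, 'c, 'v, 'd) guard \<rightharpoonup> ('v, 'd) update)
   \<Rightarrow> 's set \<Rightarrow> ('s \<Rightarrow> 'c set \<Rightarrow> 's) \<Rightarrow> ('s \<Rightarrow> 'e set \<times> ('v, 'd) pred set)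
   \<Rightarrow> (('v \<Rightarrow> 'd) \<times> 's) set" where
  "conc_preceq EE CC Pr \<delta> S tr out = \<Union> {R. conc_rel EE CC Pr \<delta> S tr out R}"

definition moore_concretisable ::
  "'e set \<Rightarrow> 'c set \<Rightarrow> ('v, 'd) pred set \<Rightarrow> ('v \<Rightarrow> 'd)
   \<Rightarrow> (('e, 'c, 'v, 'd) guard \<rightharpoonup> ('v, 'd) update)
   \<Rightarrow> 's set \<Rightarrow> 's \<Rightarrow> ('s \<Rightarrow> 'c set \<Rightarrow> 's) \<Rightarrow> ('s \<Rightarrow> 'e set \<times> ('v, 'd) pred set) \<Rightarrow> bool" where
  "moore_concretisable EE CC Pr val0 \<delta> S s0 tr out \<longleftrightarrow>
     (val0, s0) \<in> conc_preceq EE CC Pr \<delta> S tr out"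

end

theory Submission
  imports Defs
begin

text \<open>The arena is deterministic: an input sequence of the controller fixes both the run
  of M and the unique concrete word over it, so a trace of M is concretisable exactly when
  that one word satisfies the predicates the trace prescribes.  The pairs reached by
  running the arena and M side by side form the largest relation in the definition of
  concretisability; conversely that relation contains every reachable pair.  Both
  conditions therefore say that every joint run respects the prescribed predicates.
  Determinism holds for every delta since delta_app picks an enabled guard by THE.\<close>

lemma sat_trans_state_pred: "is_state_pred p \<Longrightarrow> sat_trans val val' p = sat_state val' p"
  by (cases p) (auto simp: is_state_pred_def)

lemma bigwedge_sat_trans_split:
  "bigwedge (sat_trans val val') Pr P \<longleftrightarrow>
   bigwedge (sat_state val') {p\<in>Pr. is_state_pred p} {p\<in>P. is_state_pred p} \<and>
   bigwedge (sat_trans val val') {p\<in>Pr. is_trans_pred p} {p\<in>P. is_trans_pred p}"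
  unfolding bigwedge_def is_trans_pred_def using sat_trans_state_pred by blast

lemma moore_run_in_states:
  assumes "is_moore CC EE' Pr S s0 tr out" and "\<forall>i. Cs i \<subseteq> CC"
  shows "moore_run s0 tr Cs n \<in> S"
  using assms by (induction n) (auto simp: is_moore_def)

lemma moore_run_cong: "\<forall>j<n. Cs' j = Cs j \<Longrightarrow> moore_run s0 tr Cs' n = moore_run s0 tr Cs n"
  by (induction n) auto

lemma moore_run_fun_upd [simp]: "moore_run s0 tr (Cs(n := C)) n = moore_run s0 tr Cs n"
  by (rule moore_run_cong) simp

context
  fixes EE :: "'e set" and CC :: "'c set" and Pr :: "('v, 'd) pred set"
    and \<delta> :: "('e, 'c, 'v, 'd) guard \<rightharpoonup> ('v, 'd) update" and val0 :: "'v \<Rightarrow> 'd"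
    and s0 :: 's and tr :: "'s \<Rightarrow> 'c set \<Rightarrow> 's" and out :: "'s \<Rightarrow> 'e set \<times> ('v, 'd) pred set"
begin

fun arena_run :: "(nat \<Rightarrow> 'c set) \<Rightarrow> nat \<Rightarrow> 'v \<Rightarrow> 'd" where
  "arena_run Cs 0 = val0"
| "arena_run Cs (Suc i) =
     delta_app \<delta> (arena_run Cs i) (fst (out (moore_run s0 tr Cs i)) \<inter> EE) (Cs i)"

definition moore_trace :: "(nat \<Rightarrow> 'c set) \<Rightarrow> nat \<Rightarrow> 'e set \<times> 'c set \<times> ('v, 'd) pred set" where
  "moore_trace Cs i = (fst (out (moore_run s0 tr Cs i)), Cs i, snd (out (moore_run s0 tr Cs i)))"

definition concrete_word :: "(nat \<Rightarrow> 'c set) \<Rightarrow> nat \<Rightarrow> ('v \<Rightarrow> 'd) \<times> 'e set \<times> 'c set" where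
  "concrete_word Cs i = (arena_run Cs i, fst (out (moore_run s0 tr Cs i)) \<inter> EE, Cs i)"

abbreviation state_consistent :: "('v \<Rightarrow> 'd) \<Rightarrow> 's \<Rightarrow> bool" where
  "state_consistent val s \<equiv>
     bigwedge (sat_state val) {p\<in>Pr. is_state_pred p} {p\<in>snd (out s). is_state_pred p}"

abbreviation trans_consistent :: "('v \<Rightarrow> 'd) \<Rightarrow> ('v \<Rightarrow> 'd) \<Rightarrow> 's \<Rightarrow> bool" where
  "trans_consistent val val' s' \<equiv>
     bigwedge (sat_trans val val') {p\<in>Pr. is_trans_pred p} {p\<in>snd (out s'). is_trans_pred p}"

definition consistent_run :: "(nat \<Rightarrow> 'c set) \<Rightarrow> bool" where
  "consistent_run Cs \<longleftrightarrow>
     (\<forall>i. state_consistent (arena_run Cs i) (moore_run s0 tr Cs i) \<and>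
          trans_consistent (arena_run Cs i) (arena_run Cs (Suc i)) (moore_run s0 tr Cs (Suc i)))"

lemma moore_lang_eq: "moore_lang CC s0 tr out = {moore_trace Cs | Cs. \<forall>i. Cs i \<subseteq> CC}"
  unfolding moore_lang_def moore_trace_def[abs_def] ..

lemma arena_run_cong: "\<forall>j<n. Cs' j = Cs j \<Longrightarrow> arena_run Cs' n = arena_run Cs n"
proof (induction n)
  case (Suc n)
  then have "moore_run s0 tr Cs' n = moore_run s0 tr Cs n"
    by (simp add: moore_run_cong)
  with Suc show ?case by simp
qed simp

lemma arena_run_fun_upd [simp]: "arena_run (Cs(n := C)) n = arena_run Cs n"
  by (rule arena_run_cong) simp

lemma concrete_word_in_arena_lang:
  "\<forall>i. Cs i \<subseteq> CC \<Longrightarrow> concrete_word Cs \<in> arena_lang EE CC val0 \<delta>"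
  by (simp add: arena_lang_def concrete_word_def)

lemma abstracts_moore_trace_unique:
  assumes "w \<in> arena_lang EE CC val0 \<delta>" and "abstracts EE Pr (moore_trace Cs) w"
  shows "w = concrete_word Cs"
proof
  fix i
  have letters: "snd (w i) = (fst (out (moore_run s0 tr Cs i)) \<inter> EE, Cs i)" for i
    using assms(2) by (simp add: abstracts_def moore_trace_def)
  have "fst (w i) = arena_run Cs i"
  proof (induction i)
    case 0
    then show ?case using assms(1) by (simp add: arena_lang_def)
  next
    case (Suc i)
    then show ?case using assms(1) letters[of i] by (simp add: arena_lang_def)
  qed
  with letters[of i] show "w i = concrete_word Cs i"
    by (simp add: concrete_word_def prod_eq_iff)
qed

lemma concretisable_moore_trace_iff:
  assumes "\<forall>i. Cs i \<subseteq> CC"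
  shows "concretisable_word EE CC Pr val0 \<delta> (moore_trace Cs) \<longleftrightarrow>
         abstracts EE Pr (moore_trace Cs) (concrete_word Cs)"
proof
  assume "concretisable_word EE CC Pr val0 \<delta> (moore_trace Cs)"
  then obtain w where "w \<in> arena_lang EE CC val0 \<delta>" "abstracts EE Pr (moore_trace Cs) w"
    unfolding concretisable_word_def gamma_def by blast
  then show "abstracts EE Pr (moore_trace Cs) (concrete_word Cs)"
    using abstracts_moore_trace_unique by simp
next
  assume "abstracts EE Pr (moore_trace Cs) (concrete_word Cs)"
  with concrete_word_in_arena_lang[OF assms]
  show "concretisable_word EE CC Pr val0 \<delta> (moore_trace Cs)"
    unfolding concretisable_word_def gamma_def by blast
qed

lemma abstracts_concrete_word_iff:
  "abstracts EE Pr (moore_trace Cs) (concrete_word Cs) \<longleftrightarrow> consistent_run Cs"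
proof -
  have all_pos: "(\<forall>i>0. P i) \<longleftrightarrow> (\<forall>i. P (Suc i))" for P :: "nat \<Rightarrow> bool"
    by (metis gr0_implies_Suc zero_less_Suc)
  have all_nat: "(\<forall>i. P i) \<longleftrightarrow> P 0 \<and> (\<forall>i. P (Suc i))" for P :: "nat \<Rightarrow> bool"
    by (metis nat.exhaust)
  have "abstracts EE Pr (moore_trace Cs) (concrete_word Cs) \<longleftrightarrow>
      state_consistent (arena_run Cs 0) (moore_run s0 tr Cs 0) \<and>
      (\<forall>i. bigwedge (sat_trans (arena_run Cs i) (arena_run Cs (Suc i))) Pr
                    (snd (out (moore_run s0 tr Cs (Suc i)))))"
    unfolding abstracts_def all_pos moore_trace_def concrete_word_def
    by (simp del: arena_run.simps moore_run.simps)
  \<comment> \<open>sat_trans evaluates state predicates on the later valuation, so the constraint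
    at trace position i + 1 also fixes the state predicates of step i + 1\<close>
  also have "\<dots> \<longleftrightarrow> consistent_run Cs"
    unfolding bigwedge_sat_trans_split[of _ _ Pr] consistent_run_def all_conj_distrib
    by (subst (3) all_nat) (simp only: conj_assoc)
  finally show ?thesis .
qed

lemma conc_relD:
  assumes "conc_rel EE CC Pr \<delta> S tr out R" and "(val, s) \<in> R"
  shows "s \<in> S" and "state_consistent val s"
    and "C \<subseteq> CC \<Longrightarrow> trans_consistent val (delta_app \<delta> val (fst (out s) \<inter> EE) C) (tr s C)"
    and "C \<subseteq> CC \<Longrightarrow> (delta_app \<delta> val (fst (out s) \<inter> EE) C, tr s C) \<in> R"
  using bspec[OF assms(1)[unfolded conc_rel_def] assms(2)] by (simp_all add: Let_def)

lemma conc_rel_contains_runs: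
  assumes "conc_rel EE CC Pr \<delta> S tr out R" and "(val0, s0) \<in> R" and "\<forall>i. Cs i \<subseteq> CC"
  shows "(arena_run Cs n, moore_run s0 tr Cs n) \<in> R"
proof (induction n)
  case (Suc n)
  from conc_relD(4)[OF assms(1) Suc] assms(3) show ?case by simp
qed (simp add: assms(2))

lemma moore_concretisable_imp_consistent_run:
  assumes "moore_concretisable EE CC Pr val0 \<delta> S s0 tr out" and "\<forall>i. Cs i \<subseteq> CC"
  shows "consistent_run Cs"
proof -
  obtain R where R: "conc_rel EE CC Pr \<delta> S tr out R" "(val0, s0) \<in> R"
    using assms(1) unfolding moore_concretisable_def conc_preceq_def by blast
  show ?thesis
    unfolding consistent_run_def
  proof
    fix i
    note reached = conc_rel_contains_runs[OF R assms(2), of i]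
    show "state_consistent (arena_run Cs i) (moore_run s0 tr Cs i) \<and>
        trans_consistent (arena_run Cs i) (arena_run Cs (Suc i)) (moore_run s0 tr Cs (Suc i))"
      unfolding arena_run.simps(2) moore_run.simps(2)
      using conc_relD(2)[OF R(1) reached] conc_relD(3)[OF R(1) reached assms(2)[rule_format]]
      by (rule conjI)
  qed
qed

lemma consistent_runs_imp_moore_concretisable:
  assumes moore: "is_moore CC EE' Pr S s0 tr out"
    and consistent: "\<And>Cs. \<forall>i. Cs i \<subseteq> CC \<Longrightarrow> consistent_run Cs"
  shows "moore_concretisable EE CC Pr val0 \<delta> S s0 tr out"
proof -
  define R where "R = {(arena_run Cs n, moore_run s0 tr Cs n) | Cs n. \<forall>i. Cs i \<subseteq> CC}"
  have "conc_rel EE CC Pr \<delta> S tr out R"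
    unfolding conc_rel_def Let_def
  proof (intro ballI, clarify)
    fix val s assume "(val, s) \<in> R"
    then obtain Cs n where Cs: "\<forall>i. Cs i \<subseteq> CC"
      and val: "val = arena_run Cs n" and s: "s = moore_run s0 tr Cs n"
      unfolding R_def by blast
    show "s \<in> S \<and> state_consistent val s \<and>
      (\<forall>C. C \<subseteq> CC \<longrightarrow>
         trans_consistent val (delta_app \<delta> val (fst (out s) \<inter> EE) C) (tr s C) \<and>
         (delta_app \<delta> val (fst (out s) \<inter> EE) C, tr s C) \<in> R)"
    proof (intro conjI allI impI)
      show "s \<in> S"
        using moore_run_in_states[OF moore Cs] s by simp
      show "state_consistent val s"
        using consistent[OF Cs] val s unfolding consistent_run_def by blast
      fix C assume "C \<subseteq> CC"
      \<comment> \<open>redirecting the input at step n leaves the joint run up to step n unchanged\<close>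
      let ?Cs = "Cs(n := C)"
      have Cs': "\<forall>i. ?Cs i \<subseteq> CC"
        using Cs \<open>C \<subseteq> CC\<close> by simp
      have "trans_consistent (arena_run ?Cs n) (arena_run ?Cs (Suc n)) (moore_run s0 tr ?Cs (Suc n))"
        using consistent[OF Cs'] unfolding consistent_run_def by blast
      then show "trans_consistent val (delta_app \<delta> val (fst (out s) \<inter> EE) C) (tr s C)"
        using val s by simp
      have "(arena_run ?Cs (Suc n), moore_run s0 tr ?Cs (Suc n)) \<in> R"
        unfolding R_def using Cs' by blast
      then show "(delta_app \<delta> val (fst (out s) \<inter> EE) C, tr s C) \<in> R"
        using val s by simp
    qed
  qed
  moreover have "(val0, s0) \<in> R"
    unfolding R_def by (rule CollectI, rule exI[of _ "\<lambda>_. {}"], rule exI[of _ 0]) simp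
  ultimately show ?thesis
    unfolding moore_concretisable_def conc_preceq_def by blast
qed

lemma moore_concretisable_iff_consistent_runs:
  assumes "is_moore CC EE' Pr S s0 tr out"
  shows "moore_concretisable EE CC Pr val0 \<delta> S s0 tr out \<longleftrightarrow>
         (\<forall>Cs. (\<forall>i. Cs i \<subseteq> CC) \<longrightarrow> consistent_run Cs)"
  using moore_concretisable_imp_consistent_run consistent_runs_imp_moore_concretisable[OF assms]
  by blast

lemma moore_traces_concretisable_iff_consistent_runs:
  "(\<forall>t\<in>moore_lang CC s0 tr out. concretisable_word EE CC Pr val0 \<delta> t) \<longleftrightarrow>
   (\<forall>Cs. (\<forall>i. Cs i \<subseteq> CC) \<longrightarrow> consistent_run Cs)"
proof -
  have "(\<forall>t\<in>moore_lang CC s0 tr out. concretisable_word EE CC Pr val0 \<delta> t) \<longleftrightarrow>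
        (\<forall>Cs. (\<forall>i. Cs i \<subseteq> CC) \<longrightarrow> concretisable_word EE CC Pr val0 \<delta> (moore_trace Cs))"
    unfolding moore_lang_eq by blast
  also have "\<dots> \<longleftrightarrow> (\<forall>Cs. (\<forall>i. Cs i \<subseteq> CC) \<longrightarrow> consistent_run Cs)"
    by (simp add: concretisable_moore_trace_iff abstracts_concrete_word_iff)
  finally show ?thesis .
qed

end

theorem mainTheorem3:
  fixes EE EE' :: "'e set" and CC :: "'c set"
    and val0 :: "'v::finite \<Rightarrow> 'd"
    and \<delta> :: "('e, 'c, 'v, 'd) guard \<rightharpoonup> ('v, 'd) update"
    and Pr :: "('v, 'd) pred set"
    and S :: "'s set" and s0 :: 's and tr :: "'s \<Rightarrow> 'c set \<Rightarrow> 's"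
    and out :: "'s \<Rightarrow> 'e set \<times> ('v, 'd) pred set"
  assumes "is_arena EE CC \<delta>"
    and "finite Pr" and "finite EE'" and "EE \<subseteq> EE'"
    and "is_moore CC EE' Pr S s0 tr out"
  shows "moore_concretisable EE CC Pr val0 \<delta> S s0 tr out \<longleftrightarrow>
         (\<forall>t\<in>moore_lang CC s0 tr out. concretisable_word EE CC Pr val0 \<delta> t)"
  by (simp only: moore_concretisable_iff_consistent_runs[OF assms(5)]
      moore_traces_concretisable_iff_consistent_runs)

end
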